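(* Let $g$ be the Lorentzian form on $\mathbb{R}^4$ with matrix $\mathrm{diag}(1,1,1,-c^2)$, $\mathcal{L}^{\uparrow}_+$ its proper orthochronous Lorentz group, and $u$ a timelike vector. Let $H(u)=\{L\in\mathcal{L}^{\uparrow}_+ : Lu=u\}$ and let $(\mathcal{P}^{\uparrow}_+)_X$ be the group of maps $x\mapsto Lx+b$ with $L\in H(u)$, $b\in\mathbb{R}^4$. Let $CH(u)$ be the set of $M\in\mathbb{R}^+\mathcal{L}^{\uparrow}_+=\{\mu L:\mu>0, L\in\mathcal{L}^{\uparrow}_+\}$ with $M(\langle u\rangle)=\langle u\rangle$, where $\langle u\rangle$ is the line spanned by $u$, and let $C(\mathcal{P}^{\uparrow}_+)_X$ be the group of maps $x\mapsto Mx+b$ with $M\in CH(u)$, $b\in\mathbb{R}^4$. Let $\langle u\rangle^\perp=\{v: g(v,u)=0\}$. (A) An equivalence relation on $\mathbb{R}^4$ is $(\mathcal{P}^{\uparrow}_+)_X$-invariant if and only if there is an additive subgroup $H$ of $\mathbb{R}$ such that either (i) $[x]=x+Hu$ for all $x$, or (ii) $[x]=x+(\langle u\rangle^\perp+Hu)$ for all $x$. (B) The standard synchrony $R_u$, defined by $x\,R_u\,y\iff g(x-y,u)=0$, is the only nontrivial $C(\mathcal{P}^{\uparrow}_+)_X$-invariant equivalence relation on $\mathbb{R}^4$ whose equivalence classes are not worldlines (i.e. not the lines $x+\mathbb{R}u$).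
   Context: An equivalence relation is invariant under a group of transformations if $x\sim y$ implies $h(x)\sim h(y)$ for all $x,y$ and all $h$ in the group. It is trivial if it is the total relation or the identity relation (diagonal). A vector $u$ is timelike if $g(u,u)<0$. *)

theory Defs
  imports "HOL-Analysis.Analysis"
begin

text \<open>Coordinates of real^4 are indexed by the type 4 = {0,1,2,3};
  indices 0,1,2 are spatial and index 3 is the time coordinate.\<close>

definition lor :: "real \<Rightarrow> real^4 \<Rightarrow> real^4 \<Rightarrow> real" where
  "lor c x y = x$0 * y$0 + x$1 * y$1 + x$2 * y$2 - c^2 * (x$3 * y$3)"

definition timelike :: "real \<Rightarrow> real^4 \<Rightarrow> bool" where
  "timelike c u \<longleftrightarrow> lor c u u < 0"

definition lorentz_po :: "real \<Rightarrow> (real^4^4) set" where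
  "lorentz_po c = {L. (\<forall>x y. lor c (L *v x) (L *v y) = lor c x y) \<and> det L = 1 \<and> L$3$3 > 0}"

definition stab :: "real \<Rightarrow> real^4 \<Rightarrow> (real^4^4) set" where
  "stab c u = {L \<in> lorentz_po c. L *v u = u}"

definition poinc_X :: "real \<Rightarrow> real^4 \<Rightarrow> (real^4 \<Rightarrow> real^4) set" where
  "poinc_X c u = {(\<lambda>x. L *v x + b) | L b. L \<in> stab c u}"

definition line :: "real^4 \<Rightarrow> (real^4) set" where
  "line u = {t *\<^sub>R u | t. True}"

definition conf_stab :: "real \<Rightarrow> real^4 \<Rightarrow> (real^4^4) set" where
  "conf_stab c u = {M. (\<exists>\<mu> L. \<mu> > 0 \<and> L \<in> lorentz_po c \<and> M = \<mu> *\<^sub>R L)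
                       \<and> (\<lambda>x. M *v x) ` line u = line u}"

definition conf_poinc_X :: "real \<Rightarrow> real^4 \<Rightarrow> (real^4 \<Rightarrow> real^4) set" where
  "conf_poinc_X c u = {(\<lambda>x. M *v x + b) | M b. M \<in> conf_stab c u}"

definition invariant_under :: "('a \<Rightarrow> 'a) set \<Rightarrow> 'a rel \<Rightarrow> bool" where
  "invariant_under G R \<longleftrightarrow> (\<forall>h\<in>G. \<forall>x y. (x, y) \<in> R \<longrightarrow> (h x, h y) \<in> R)"

definition trivial_rel :: "'a rel \<Rightarrow> bool" where
  "trivial_rel R \<longleftrightarrow> R = UNIV \<or> R = Id"

definition add_subgroup :: "real set \<Rightarrow> bool" where
  "add_subgroup H \<longleftrightarrow> 0 \<in> H \<and> (\<forall>a\<in>H. \<forall>b\<in>H. a + b \<in> H) \<and> (\<forall>a\<in>H. - a \<in> H)"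

definition orth :: "real \<Rightarrow> real^4 \<Rightarrow> (real^4) set" where
  "orth c u = {v. lor c v u = 0}"

definition std_sync :: "real \<Rightarrow> real^4 \<Rightarrow> (real^4) rel" where
  "std_sync c u = {(x, y). lor c (x - y) u = 0}"

end

theory Submission
  imports Defs
begin

text \<open>Translation invariance makes an invariant equivalence relation R the coset relation of the
  additive subgroup K = R `` {0}, and invariance under H(u) makes K invariant under H(u). This group
  contains the products of two Lorentz reflections in vectors of u^perp, which act transitively on
  each sphere of the Euclidean space u^perp. So if K contains a vector whose u^perp-component v is
  nonzero, it contains every chord of the sphere through v, hence a ball of u^perp, and by
  additivity all of u^perp. Thus K is Hu or u^perp + Hu with H = {h. hu \<in> K}. In the conformal
  case dilations make H a cone, so H is 0 or the whole line, and of the four resulting relations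
  (identity, worldlines, standard synchrony, total) only the standard synchrony is nontrivial and
  not the worldline relation.\<close>

lemma UNIV_4_from_0: "UNIV = {0::4, 1, 2, 3}"
  using UNIV_4 by auto

lemma sum_UNIV_4: "(\<Sum>i\<in>UNIV. f i) = f (0::4) + f 1 + f 2 + f 3"
  unfolding UNIV_4_from_0 by (simp add: algebra_simps)

lemma vec4_eq_iff: "(x::'a^4) = y \<longleftrightarrow> x$0 = y$0 \<and> x$1 = y$1 \<and> x$2 = y$2 \<and> x$3 = y$3"
  unfolding vec_eq_iff using UNIV_4_from_0 by (metis UNIV_I insertE singletonD)

section \<open>The Lorentzian form and causal vectors\<close>

lemma lor_commute: "lor c x y = lor c y x"
  by (simp add: lor_def algebra_simps)

lemma lor_add_left: "lor c (x + y) z = lor c x z + lor c y z"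
  and lor_add_right: "lor c z (x + y) = lor c z x + lor c z y"
  and lor_diff_left: "lor c (x - y) z = lor c x z - lor c y z"
  and lor_diff_right: "lor c z (x - y) = lor c z x - lor c z y"
  and lor_scaleR_left: "lor c (a *\<^sub>R x) z = a * lor c x z"
  and lor_scaleR_right: "lor c z (a *\<^sub>R x) = a * lor c z x"
  and lor_minus_left: "lor c (- x) z = - lor c x z"
  and lor_minus_right: "lor c z (- x) = - lor c z x"
  and lor_zero_left: "lor c 0 z = 0"
  and lor_zero_right: "lor c z 0 = 0"
  by (simp_all add: lor_def algebra_simps)

lemmas lor_simps = lor_add_left lor_add_right lor_diff_left lor_diff_right lor_scaleR_left
  lor_scaleR_right lor_minus_left lor_minus_right lor_zero_left lor_zero_right

definition lor_dual :: "real \<Rightarrow> real^4 \<Rightarrow> real^4" where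
  "lor_dual c v = (\<chi> i. (if i = 3 then - (c^2) else 1) * v$i)"

lemma inner_lor_dual: "x \<bullet> lor_dual c v = lor c x v"
  by (simp add: inner_vec_def sum_UNIV_4 lor_dual_def lor_def)

lemma lor_orthogonal_to_two_exists:
  fixes u y :: "real^4"
  obtains n where "n \<noteq> 0" "lor c n u = 0" "lor c n y = 0"
proof -
  have "dim {lor_dual c u, lor_dual c y} \<le> card {lor_dual c u, lor_dual c y}"
    by (rule dim_le_card) (auto intro: span_base)
  also have "\<dots> < DIM(real^4)"
    by (cases "lor_dual c u = lor_dual c y") auto
  finally obtain n where "n \<noteq> 0" "\<And>z. z \<in> span {lor_dual c u, lor_dual c y} \<Longrightarrow> orthogonal n z"
    using orthogonal_to_subspace_exists by blast
  then have "n \<bullet> lor_dual c u = 0" "n \<bullet> lor_dual c y = 0"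
    by (auto simp: orthogonal_def intro: span_base)
  with \<open>n \<noteq> 0\<close> show ?thesis
    using that by (simp add: inner_lor_dual)
qed

lemma cauchy_schwarz_3:
  fixes a0 a1 a2 b0 b1 b2 :: real
  shows "(a0*b0 + a1*b1 + a2*b2)^2 \<le> (a0^2 + a1^2 + a2^2) * (b0^2 + b1^2 + b2^2)"
proof -
  have "(a0^2 + a1^2 + a2^2) * (b0^2 + b1^2 + b2^2) - (a0*b0 + a1*b1 + a2*b2)^2
        = (a0*b1 - a1*b0)^2 + (a0*b2 - a2*b0)^2 + (a1*b2 - a2*b1)^2"
    by algebra
  then show ?thesis
    by (smt (verit) zero_le_power2)
qed

lemma spatial_inner_less_time_product:
  assumes c: "c > 0" and w: "lor c w w \<le> 0" "w \<noteq> 0" and u: "timelike c u"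
  shows "\<bar>w$0*u$0 + w$1*u$1 + w$2*u$2\<bar> < c^2 * \<bar>w$3 * u$3\<bar>"
proof -
  define s where "s = w$0*u$0 + w$1*u$1 + w$2*u$2"
  define A where "A = (w$0)^2 + (w$1)^2 + (w$2)^2"
  define B where "B = (u$0)^2 + (u$1)^2 + (u$2)^2"
  have A: "A \<le> c^2 * (w$3)^2"
    using w(1) unfolding lor_def A_def power2_eq_square by linarith
  have B: "B < c^2 * (u$3)^2"
    using u unfolding timelike_def lor_def B_def power2_eq_square by linarith
  have w3: "w$3 \<noteq> 0"
  proof
    assume "w$3 = 0"
    then have "A \<le> 0" using A by simp
    then have "w$0 = 0" "w$1 = 0" "w$2 = 0"
      unfolding A_def by (smt (verit) zero_le_power2 power2_less_eq_zero_iff)+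
    with \<open>w$3 = 0\<close> w(2) show False by (simp add: vec4_eq_iff)
  qed
  have "s^2 \<le> A * B"
    unfolding s_def A_def B_def by (rule cauchy_schwarz_3)
  also have "\<dots> \<le> (c^2 * (w$3)^2) * B"
    using A by (simp add: B_def mult_right_mono)
  also have "\<dots> < (c^2 * (w$3)^2) * (c^2 * (u$3)^2)"
    using B w3 c by simp
  also have "\<dots> = (c^2 * \<bar>w$3 * u$3\<bar>)^2"
    by (simp add: power_mult_distrib power2_abs)
  finally show ?thesis
    unfolding s_def
    by (metis abs_ge_zero power2_abs power_less_imp_less_base zero_le_mult_iff zero_le_power2)
qed

lemma sgn_lor_causal_timelike:
  assumes c: "c > 0" and "lor c w w \<le> 0" "w \<noteq> 0" and "timelike c u"
  shows "w$3 * u$3 \<noteq> 0" and "sgn (lor c w u) = - sgn (w$3 * u$3)"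
proof -
  note less = spatial_inner_less_time_product[OF assms]
  then show "w$3 * u$3 \<noteq> 0" by auto
  have sgn_diff: "sgn (s - q) = - sgn q" if "\<bar>s\<bar> < \<bar>q\<bar>" for s q :: real
    using that by (auto simp: sgn_if)
  have "\<bar>w$0*u$0 + w$1*u$1 + w$2*u$2\<bar> < \<bar>c^2 * (w$3 * u$3)\<bar>"
    using less by (simp add: abs_mult)
  then have "sgn (lor c w u) = - sgn (c^2 * (w$3 * u$3))"
    unfolding lor_def by (rule sgn_diff)
  then show "sgn (lor c w u) = - sgn (w$3 * u$3)"
    using c by (simp add: sgn_mult)
qed

lemma orth_timelike_spacelike:
  assumes "c > 0" "timelike c u" "lor c a u = 0" "a \<noteq> 0"
  shows "lor c a a > 0"
proof (rule ccontr)
  assume "\<not> lor c a a > 0"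
  with sgn_lor_causal_timelike[OF assms(1) _ assms(4,2)] assms(3) show False
    by (simp add: sgn_zero_iff)
qed

lemma lorentz_fixing_timelike_orthochronous:
  fixes L :: "real^4^4"
  assumes c: "c > 0" and u: "timelike c u"
    and iso: "\<And>x y. lor c (L *v x) (L *v y) = lor c x y" and Lu: "L *v u = u"
  shows "L$3$3 > 0"
proof -
  \<comment> \<open>For causal w the sign of g(w, u) is that of -w$3 * u$3; compare w = e and w = L e.\<close>
  define e :: "real^4" where "e = axis 3 1"
  have ee: "lor c e e = - (c^2)" and e3: "e$3 = 1"
    by (simp_all add: e_def lor_def axis_def)
  have "e \<noteq> 0" using e3 by auto
  have "lor c (L *v e) (L *v e) = - (c^2)"
    using iso ee by simp
  then have "L *v e \<noteq> 0" using c by (auto simp: lor_simps)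
  have Le3: "(L *v e)$3 = L$3$3"
    by (simp add: e_def matrix_vector_mult_basis column_def)
  have "lor c (L *v e) u = lor c e u"
    using iso[of e u] Lu by simp
  then have "sgn ((L *v e)$3 * u$3) = sgn (e$3 * u$3)"
    using sgn_lor_causal_timelike(2)[OF c _ \<open>e \<noteq> 0\<close> u] ee
      sgn_lor_causal_timelike(2)[OF c _ \<open>L *v e \<noteq> 0\<close> u] \<open>lor c (L *v e) (L *v e) = - (c^2)\<close>
    by simp
  moreover have "u$3 \<noteq> 0"
    using sgn_lor_causal_timelike(1)[OF c _ \<open>e \<noteq> 0\<close> u] ee by simp
  ultimately show ?thesis
    using e3 Le3 by (auto simp: sgn_mult sgn_if zero_less_mult_iff split: if_splits)
qed

section \<open>Lorentz reflections and the stabiliser of u\<close>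

lemma det_identity_plus_rank_one:
  fixes x y :: "real^4"
  shows "det (\<chi> i j. (if i = j then 1 else 0) + x$i * y$j) = 1 + x \<bullet> y"
proof -
  have f1: "finite {1::4, 2, 3}" "0 \<notin> {1::4, 2, 3}" by auto
  have f2: "finite {2::4, 3}" "1 \<notin> {2::4, 3}" by auto
  have f3: "finite {3::4}" "2 \<notin> {3::4}" by auto
  show ?thesis
    unfolding det_def UNIV_4_from_0 inner_vec_def sum_UNIV_4
    unfolding sum_over_permutations_insert[OF f1] sum_over_permutations_insert[OF f2]
      sum_over_permutations_insert[OF f3] permutes_sing
    by (simp add: sign_swap_id permutation_swap_id sign_compose sign_id swap_id_eq
        permutation_compose algebra_simps)
qed

text \<open>The reflection x \<mapsto> x - 2 g(x, a) / g(a, a) a, written as a rank-one perturbation of the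
  identity matrix so that its determinant can be computed.\<close>

definition lor_reflection :: "real \<Rightarrow> real^4 \<Rightarrow> real^4^4" where
  "lor_reflection c a =
     (\<chi> i j. (if i = j then 1 else 0) + a$i * (- (2 / lor c a a) *\<^sub>R lor_dual c a)$j)"

lemma lor_reflection_apply:
  "lor_reflection c a *v x = x - (2 * lor c x a / lor c a a) *\<^sub>R a"
proof -
  define k where "k = 2 / lor c a a"
  have "lor_reflection c a *v x = x - (k * lor c x a) *\<^sub>R a"
    unfolding lor_reflection_def k_def[symmetric] vec4_eq_iff
    by (simp add: matrix_vector_mult_def sum_UNIV_4 lor_dual_def lor_def algebra_simps)
  then show ?thesis
    by (simp add: k_def)
qed

lemma lor_reflection_det: "lor c a a \<noteq> 0 \<Longrightarrow> det (lor_reflection c a) = -1"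
  unfolding lor_reflection_def det_identity_plus_rank_one
  by (simp add: inner_lor_dual)

lemma lor_reflection_isometry:
  "lor c (lor_reflection c a *v x) (lor_reflection c a *v y) = lor c x y"
proof (cases "lor c a a = 0")
  case False
  then show ?thesis
    unfolding lor_reflection_apply lor_simps
    by (simp add: lor_commute[of c a x] lor_commute[of c a y] field_simps)
qed (simp add: lor_reflection_apply)

lemma lor_reflection_fixes_orth: "lor c x a = 0 \<Longrightarrow> lor_reflection c a *v x = x"
  by (simp add: lor_reflection_apply)

lemma lor_reflection_swaps:
  assumes "lor c v v = lor c w w" and "lor c (v - w) (v - w) \<noteq> 0"
  shows "lor_reflection c (v - w) *v v = w"
proof -
  have "lor c (v - w) (v - w) = 2 * lor c v (v - w)"
    using assms(1) by (simp add: lor_simps lor_commute[of c w v])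
  then show ?thesis
    using assms(2) by (simp add: lor_reflection_apply lor_commute[of c "v - w" v])
qed

lemma mat_1_in_stab: "mat 1 \<in> stab c u"
proof -
  have "(mat 1 :: real^4^4)$3$3 = 1"
    by (simp add: mat_def)
  then show ?thesis
    by (simp add: stab_def lorentz_po_def)
qed

lemma lor_reflection_product_in_stab:
  assumes c: "c > 0" and u: "timelike c u"
    and a: "lor c a u = 0" "a \<noteq> 0" and b: "lor c b u = 0" "b \<noteq> 0"
  shows "lor_reflection c b ** lor_reflection c a \<in> stab c u"
proof -
  let ?L = "lor_reflection c b ** lor_reflection c a"
  have iso: "\<And>x y. lor c (?L *v x) (?L *v y) = lor c x y"
    by (simp add: matrix_vector_mul_assoc[symmetric] lor_reflection_isometry)
  have Lu: "?L *v u = u"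
    using a b by (simp add: matrix_vector_mul_assoc[symmetric] lor_reflection_fixes_orth
        lor_commute[of c u])
  have "lor c a a \<noteq> 0" "lor c b b \<noteq> 0"
    using orth_timelike_spacelike[OF c u] a b by force+
  then have "det ?L = 1"
    by (simp add: det_mul lor_reflection_det)
  with iso Lu lorentz_fixing_timelike_orthochronous[OF c u iso Lu] show ?thesis
    by (simp add: stab_def lorentz_po_def)
qed

lemma stab_transitive_on_orth_spheres:
  assumes c: "c > 0" and u: "timelike c u" and "v \<in> orth c u" "w \<in> orth c u"
    and "lor c v v = lor c w w"
  obtains L where "L \<in> stab c u" "L *v v = w"
  \<comment> \<open>the reflection in v - w swaps v and w, and a reflection fixing w makes the product proper\<close>
proof (cases "v = w")
  case True
  then show ?thesis
    using that mat_1_in_stab by fastforce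
next
  case False
  have vw: "lor c (v - w) u = 0" "v - w \<noteq> 0"
    using assms(3,4) False by (simp_all add: orth_def lor_simps)
  obtain b where b: "b \<noteq> 0" "lor c b u = 0" "lor c b w = 0"
    using lor_orthogonal_to_two_exists by blast
  have "lor c (v - w) (v - w) \<noteq> 0"
    using orth_timelike_spacelike[OF c u vw] by simp
  then have "(lor_reflection c b ** lor_reflection c (v - w)) *v v = w"
    using assms(5) b(3)
    by (simp add: matrix_vector_mul_assoc[symmetric] lor_reflection_swaps
        lor_reflection_fixes_orth lor_commute[of c w b])
  with lor_reflection_product_in_stab[OF c u vw b(2,1)] that show ?thesis
    by blast
qed

section \<open>Coset relations of additive subgroups\<close>

definition subgroup_add :: "'a::ab_group_add set \<Rightarrow> bool" where
  "subgroup_add K \<longleftrightarrow> 0 \<in> K \<and> (\<forall>a\<in>K. \<forall>b\<in>K. a - b \<in> K)"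

lemma subgroup_add_diff: "subgroup_add K \<Longrightarrow> a \<in> K \<Longrightarrow> b \<in> K \<Longrightarrow> a - b \<in> K"
  by (simp add: subgroup_add_def)

lemma subgroup_add_uminus: "subgroup_add K \<Longrightarrow> a \<in> K \<Longrightarrow> - a \<in> K"
  using subgroup_add_diff[of K 0 a] by (simp add: subgroup_add_def)

lemma subgroup_add_add:
  assumes "subgroup_add K" "a \<in> K" "b \<in> K"
  shows "a + b \<in> K"
  using subgroup_add_diff[OF assms(1,2) subgroup_add_uminus[OF assms(1,3)]] by simp

lemma subgroup_add_scaleR_of_nat:
  fixes K :: "'a::real_vector set"
  assumes "subgroup_add K" "a \<in> K"
  shows "of_nat n *\<^sub>R a \<in> K"
  by (induction n) (use assms in \<open>auto simp: subgroup_add_def subgroup_add_add scaleR_add_left\<close>)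

lemma add_subgroup_iff_subgroup_add: "add_subgroup H \<longleftrightarrow> subgroup_add H"
proof
  assume H: "add_subgroup H"
  have "a - b \<in> H" if "a \<in> H" "b \<in> H" for a b
    using H that unfolding add_subgroup_def by (metis diff_conv_add_uminus)
  with H show "subgroup_add H"
    by (simp add: add_subgroup_def subgroup_add_def)
next
  assume H: "subgroup_add H"
  then have "0 \<in> H" by (simp add: subgroup_add_def)
  with H show "add_subgroup H"
    by (simp add: add_subgroup_def subgroup_add_add subgroup_add_uminus)
qed

lemma subgroup_add_scaleR_preimage:
  fixes K :: "'a::real_vector set"
  assumes "subgroup_add K"
  shows "subgroup_add {h. h *\<^sub>R u \<in> K}"
  using assms by (simp add: subgroup_add_def scaleR_diff_left)

definition coset_rel :: "'a::ab_group_add set \<Rightarrow> 'a rel" where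
  "coset_rel K = {(x, y). y - x \<in> K}"

lemma Image_coset_rel: "coset_rel K `` {x} = {x + k | k. k \<in> K}"
  by (force simp: coset_rel_def)

lemma eq_coset_rel_iff_Image: "R = coset_rel K \<longleftrightarrow> (\<forall>x. R `` {x} = {x + k | k. k \<in> K})"
proof
  assume "\<forall>x. R `` {x} = {x + k | k. k \<in> K}"
  then have "(x, y) \<in> R \<longleftrightarrow> (x, y) \<in> coset_rel K" for x y
    by (simp add: Image_coset_rel[symmetric] set_eq_iff)
  then show "R = coset_rel K" by auto
qed (simp add: Image_coset_rel)

lemma equiv_coset_rel_iff: "equiv UNIV (coset_rel K) \<longleftrightarrow> subgroup_add K"
proof
  assume "equiv UNIV (coset_rel K)"
  then have "refl (coset_rel K)" "sym (coset_rel K)" "trans (coset_rel K)"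
    by (auto elim: equivE)
  then have "(0, 0) \<in> coset_rel K"
    "\<And>a b. (0, a) \<in> coset_rel K \<Longrightarrow> (0, b) \<in> coset_rel K \<Longrightarrow> (b, a) \<in> coset_rel K"
    by (auto dest: refl_onD symD transD)
  then show "subgroup_add K"
    by (simp add: subgroup_add_def coset_rel_def)
next
  assume K: "subgroup_add K"
  show "equiv UNIV (coset_rel K)"
  proof (rule equivI)
    show "refl (coset_rel K)"
      using K by (auto intro: refl_onI simp: coset_rel_def subgroup_add_def)
    show "sym (coset_rel K)"
      using subgroup_add_uminus[OF K] by (fastforce intro: symI simp: coset_rel_def)
    show "trans (coset_rel K)"
      using subgroup_add_add[OF K] by (fastforce intro: transI simp: coset_rel_def)
  qed (simp add: coset_rel_def)
qed

lemma translation_invariant_equiv_eq_coset_rel: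
  fixes R :: "'a::ab_group_add rel"
  assumes "equiv UNIV R" and tr: "\<And>b x y. (x, y) \<in> R \<Longrightarrow> (x + b, y + b) \<in> R"
  shows "R = coset_rel (R `` {0})"
proof -
  have "(x, y) \<in> R \<longleftrightarrow> (0, y - x) \<in> R" for x y
    using tr[of x y "- x"] tr[of 0 "y - x" x] by auto
  then show ?thesis
    by (auto simp: coset_rel_def)
qed

lemma invariant_under_affine_coset_rel:
  fixes K :: "(real^'n) set" and S :: "(real^'n^'n) set"
  assumes "\<And>M k. M \<in> S \<Longrightarrow> k \<in> K \<Longrightarrow> M *v k \<in> K"
  shows "invariant_under {(\<lambda>x. M *v x + b) | M b. M \<in> S} (coset_rel K)"
  unfolding invariant_under_def coset_rel_def
  using assms by (auto simp: matrix_vector_mult_diff_distrib[symmetric])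

section \<open>Stabiliser-invariant subgroups\<close>

lemma subgroup_add_orth: "subgroup_add (orth c u)"
  by (simp add: subgroup_add_def orth_def lor_simps)

lemma stab_preserves_orth:
  assumes "L \<in> stab c u" "v \<in> orth c u"
  shows "L *v v \<in> orth c u"
proof -
  have "lor c (L *v x) (L *v y) = lor c x y" for x y
    using assms(1) by (simp add: stab_def lorentz_po_def)
  moreover have "L *v u = u"
    using assms(1) by (simp add: stab_def)
  ultimately show ?thesis
    using assms(2) by (metis orth_def mem_Collect_eq)
qed

definition orth_proj :: "real \<Rightarrow> real^4 \<Rightarrow> real^4 \<Rightarrow> real^4" where
  "orth_proj c u z = z - (lor c z u / lor c u u) *\<^sub>R u"

lemma orth_proj_in_orth: "timelike c u \<Longrightarrow> orth_proj c u z \<in> orth c u"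
  by (simp add: orth_proj_def orth_def timelike_def lor_simps)

lemma orth_proj_eq_self: "v \<in> orth c u \<Longrightarrow> orth_proj c u v = v"
  by (simp add: orth_proj_def orth_def)

lemma orth_proj_eq_0_iff:
  assumes "timelike c u"
  shows "orth_proj c u z = 0 \<longleftrightarrow> z \<in> line u"
proof -
  have "lor c u u \<noteq> 0" using assms by (simp add: timelike_def)
  then show ?thesis
    by (auto simp: orth_proj_def line_def lor_simps)
qed

lemma orth_inter_line: "timelike c u \<Longrightarrow> v \<in> orth c u \<Longrightarrow> v \<in> line u \<Longrightarrow> v = 0"
  by (metis orth_proj_eq_0_iff orth_proj_eq_self)

lemma orth_plus_line:
  assumes "timelike c u"
  shows "\<exists>v t. v \<in> orth c u \<and> z = v + t *\<^sub>R u"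
  using orth_proj_in_orth[OF assms] by (metis orth_proj_def diff_add_cancel)

lemma orth_ball_sphere_differences:
  assumes c: "c > 0" and u: "timelike c u" and v: "v \<in> orth c u" and a: "a \<in> orth c u"
    and small: "lor c a a \<le> 4 * lor c v v"
  obtains w1 w2 where "w1 \<in> orth c u" "w2 \<in> orth c u"
    "lor c w1 w1 = lor c v v" "lor c w2 w2 = lor c v v" "a = w1 - w2"
proof -
  obtain n where n: "n \<noteq> 0" "lor c n u = 0" "lor c n a = 0"
    using lor_orthogonal_to_two_exists by blast
  have "lor c n n > 0"
    using orth_timelike_spacelike[OF c u n(2,1)] .
  \<comment> \<open>a = (a/2 + s n) - (-a/2 + s n), both endpoints having the Lorentz square of v\<close>
  define s where "s = sqrt ((lor c v v - lor c a a / 4) / lor c n n)"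
  have s2: "s^2 * lor c n n = lor c v v - lor c a a / 4"
    using \<open>lor c n n > 0\<close> small by (simp add: s_def)
  define w1 where "w1 = (1/2) *\<^sub>R a + s *\<^sub>R n"
  define w2 where "w2 = (-1/2) *\<^sub>R a + s *\<^sub>R n"
  have "lor c a n = 0"
    using n(3) by (simp add: lor_commute)
  then have "lor c w1 w1 = lor c v v" "lor c w2 w2 = lor c v v"
    using s2 n(3) by (simp_all add: w1_def w2_def lor_simps power2_eq_square algebra_simps)
  moreover have "w1 \<in> orth c u" "w2 \<in> orth c u"
    using a n(2) by (simp_all add: w1_def w2_def orth_def lor_simps)
  moreover have "a = w1 - w2"
    by (simp add: w1_def w2_def scaleR_left_diff_distrib[symmetric])
  ultimately show ?thesis using that by blast
qed

lemma orth_subset_stab_invariant_subgroup: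
  assumes c: "c > 0" and u: "timelike c u" and K: "subgroup_add K"
    and inv: "\<And>L k. L \<in> stab c u \<Longrightarrow> k \<in> K \<Longrightarrow> L *v k \<in> K"
    and z: "z \<in> K" "z \<notin> line u"
  shows "orth c u \<subseteq> K"
proof
  define v where "v = orth_proj c u z"
  define t where "t = lor c z u / lor c u u"
  have z_eq: "z = v + t *\<^sub>R u"
    by (simp add: v_def t_def orth_proj_def)
  have v: "v \<in> orth c u" "v \<noteq> 0"
    using orth_proj_in_orth[OF u] orth_proj_eq_0_iff[OF u] z(2) by (auto simp: v_def)
  define Q where "Q = lor c v v"
  have "Q > 0"
    using orth_timelike_spacelike[OF c u] v by (simp add: Q_def orth_def)
  have sphere: "w - v \<in> K" if w: "w \<in> orth c u" "lor c w w = Q" for w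
  proof -
    obtain L where L: "L \<in> stab c u" "L *v v = w"
      using stab_transitive_on_orth_spheres[OF c u v(1) w(1)] w(2) Q_def by metis
    then have "L *v z = w + t *\<^sub>R u"
      by (simp add: z_eq stab_def matrix_vector_right_distrib matrix_vector_mult_scaleR)
    then have "L *v z - z = w - v"
      by (simp add: z_eq)
    with subgroup_add_diff[OF K inv[OF L(1) z(1)] z(1)] show ?thesis
      by simp
  qed
  have ball: "a \<in> K" if a: "a \<in> orth c u" "lor c a a \<le> 4 * Q" for a
  proof -
    obtain w1 w2 where "w1 \<in> orth c u" "w2 \<in> orth c u"
      "lor c w1 w1 = Q" "lor c w2 w2 = Q" "a = w1 - w2"
      using orth_ball_sphere_differences[OF c u v(1) a(1)] a(2) Q_def by metis
    then have "a = (w1 - v) - (w2 - v)" "w1 - v \<in> K" "w2 - v \<in> K"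
      using sphere by simp_all
    then show ?thesis
      using subgroup_add_diff[OF K] by metis
  qed
  fix y assume y: "y \<in> orth c u"
  obtain n :: nat where "lor c y y / Q \<le> real n"
    using real_arch_simple by blast
  define N where "N = Suc n"
  have "lor c y y \<le> real n * Q"
    using \<open>lor c y y / Q \<le> real n\<close> \<open>Q > 0\<close> by (simp add: pos_divide_le_eq)
  then have N: "real N \<ge> 1" "lor c y y \<le> real N * Q"
    using \<open>Q > 0\<close> by (simp_all add: N_def distrib_right)
  define y' where "y' = (1 / real N) *\<^sub>R y"
  have "y' \<in> orth c u"
    using y by (simp add: y'_def orth_def lor_simps)
  have "lor c y' y' = lor c y y / (real N)^2"
    by (simp add: y'_def lor_simps power2_eq_square)
  also have "\<dots> \<le> real N * Q / (real N)^2"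
    using N(2) by (simp add: divide_right_mono)
  also have "\<dots> = Q / real N"
    by (simp add: power2_eq_square)
  also have "\<dots> \<le> 4 * Q"
    using N(1) \<open>Q > 0\<close> by (simp add: divide_le_eq)
  finally have "y' \<in> K"
    using ball \<open>y' \<in> orth c u\<close> by simp
  then have "real N *\<^sub>R y' \<in> K"
    using subgroup_add_scaleR_of_nat[OF K] by blast
  then show "y \<in> K"
    using N(1) by (simp add: y'_def)
qed

lemma stab_invariant_subgroup_cases:
  assumes c: "c > 0" and u: "timelike c u" and K: "subgroup_add K"
    and inv: "\<And>L k. L \<in> stab c u \<Longrightarrow> k \<in> K \<Longrightarrow> L *v k \<in> K"
  shows "K = {h *\<^sub>R u | h. h *\<^sub>R u \<in> K}
    \<or> K = {v + h *\<^sub>R u | v h. v \<in> orth c u \<and> h *\<^sub>R u \<in> K}"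
proof (cases "K \<subseteq> line u")
  case True
  then have "K = {h *\<^sub>R u | h. h *\<^sub>R u \<in> K}"
    by (auto simp: line_def)
  then show ?thesis ..
next
  case False
  then obtain z where "z \<in> K" "z \<notin> line u" by blast
  note orth_K = orth_subset_stab_invariant_subgroup[OF c u K inv this]
  have "K = {v + h *\<^sub>R u | v h. v \<in> orth c u \<and> h *\<^sub>R u \<in> K}"
  proof (intro set_eqI iffI)
    fix z assume "z \<in> K"
    define h where "h = lor c z u / lor c u u"
    have hu: "z - orth_proj c u z = h *\<^sub>R u"
      by (simp add: h_def orth_proj_def)
    have "orth_proj c u z \<in> orth c u"
      by (rule orth_proj_in_orth[OF u])
    with orth_K have "orth_proj c u z \<in> K"
      by blast
    with hu have "h *\<^sub>R u \<in> K" "z = orth_proj c u z + h *\<^sub>R u"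
      using subgroup_add_diff[OF K \<open>z \<in> K\<close>] by (metis, metis diff_add_cancel add.commute)
    then show "z \<in> {v + h *\<^sub>R u | v h. v \<in> orth c u \<and> h *\<^sub>R u \<in> K}"
      using \<open>orth_proj c u z \<in> orth c u\<close> by blast
  qed (use orth_K subgroup_add_add[OF K] in blast)
  then show ?thesis ..
qed

section \<open>Invariant equivalence relations\<close>

lemma invariant_poinc_X_kernel:
  assumes "equiv UNIV R" and inv: "invariant_under (poinc_X c u) R"
  shows "R = coset_rel (R `` {0})" and "subgroup_add (R `` {0})"
    and "\<And>L k. L \<in> stab c u \<Longrightarrow> k \<in> R `` {0} \<Longrightarrow> L *v k \<in> R `` {0}"
proof -
  have affine: "(L *v x + b, L *v y + b) \<in> R" if "L \<in> stab c u" "(x, y) \<in> R" for L b x y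
  proof -
    have "(\<lambda>z. L *v z + b) \<in> poinc_X c u"
      using that(1) by (auto simp: poinc_X_def)
    with inv that(2) show ?thesis
      unfolding invariant_under_def by fast
  qed
  have "(x + b, y + b) \<in> R" if "(x, y) \<in> R" for b x y
    using affine[OF mat_1_in_stab that] by simp
  then show R: "R = coset_rel (R `` {0})"
    using translation_invariant_equiv_eq_coset_rel[OF assms(1)] by blast
  show "subgroup_add (R `` {0})"
    using assms(1) unfolding equiv_coset_rel_iff[symmetric] by (simp only: R[symmetric])
  show "L *v k \<in> R `` {0}" if "L \<in> stab c u" "k \<in> R `` {0}" for L k
    using affine[OF that(1), where b = 0 and x = 0 and y = k] that(2) by simp
qed

lemma invariant_poinc_X_iff:
  assumes c: "c > 0" and u: "timelike c u" and eq: "equiv UNIV R"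
  shows "invariant_under (poinc_X c u) R \<longleftrightarrow>
           (\<exists>H. add_subgroup H \<and>
              ((\<forall>x. R `` {x} = {x + h *\<^sub>R u | h. h \<in> H}) \<or>
               (\<forall>x. R `` {x} = {x + v + h *\<^sub>R u | v h. v \<in> orth c u \<and> h \<in> H})))"
proof -
  define K_line where "K_line H = {h *\<^sub>R u | h. h \<in> H}" for H
  define K_orth where "K_orth H = {v + h *\<^sub>R u | v h. v \<in> orth c u \<and> h \<in> H}" for H
  have "{x + h *\<^sub>R u | h. h \<in> H} = {x + k | k. k \<in> K_line H}"
    and "{x + v + h *\<^sub>R u | v h. v \<in> orth c u \<and> h \<in> H} = {x + k | k. k \<in> K_orth H}" for x H
    by (auto simp: K_line_def K_orth_def add.assoc)
  then have classes: "(\<forall>x. R `` {x} = {x + h *\<^sub>R u | h. h \<in> H}) \<longleftrightarrow> R = coset_rel (K_line H)"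
    "(\<forall>x. R `` {x} = {x + v + h *\<^sub>R u | v h. v \<in> orth c u \<and> h \<in> H}) \<longleftrightarrow> R = coset_rel (K_orth H)"
    for H by (simp_all add: eq_coset_rel_iff_Image)
  have stab_u: "L *v u = u" if "L \<in> stab c u" for L
    using that by (simp add: stab_def)
  have "invariant_under (poinc_X c u) (coset_rel (K_line H))" for H
    unfolding poinc_X_def
  proof (rule invariant_under_affine_coset_rel)
    fix L k assume "L \<in> stab c u" "k \<in> K_line H"
    then show "L *v k \<in> K_line H"
      by (auto simp: K_line_def matrix_vector_mult_scaleR stab_u)
  qed
  moreover have "invariant_under (poinc_X c u) (coset_rel (K_orth H))" for H
    unfolding poinc_X_def
  proof (rule invariant_under_affine_coset_rel)
    fix L k assume L: "L \<in> stab c u" and "k \<in> K_orth H"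
    then obtain v h where "v \<in> orth c u" "h \<in> H" "k = v + h *\<^sub>R u"
      by (auto simp: K_orth_def)
    with L have "L *v k = L *v v + h *\<^sub>R u" "L *v v \<in> orth c u"
      by (simp_all add: matrix_vector_right_distrib matrix_vector_mult_scaleR stab_u
          stab_preserves_orth)
    with \<open>h \<in> H\<close> show "L *v k \<in> K_orth H"
      by (auto simp: K_orth_def)
  qed
  moreover have "\<exists>H. add_subgroup H \<and> (R = coset_rel (K_line H) \<or> R = coset_rel (K_orth H))"
    if inv: "invariant_under (poinc_X c u) R"
  proof -
    note kernel = invariant_poinc_X_kernel[OF eq inv]
    define H where "H = {h. h *\<^sub>R u \<in> R `` {0}}"
    have "add_subgroup H"
      unfolding H_def add_subgroup_iff_subgroup_add
      by (rule subgroup_add_scaleR_preimage[OF kernel(2)])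
    moreover have "R `` {0} = K_line H \<or> R `` {0} = K_orth H"
      using stab_invariant_subgroup_cases[OF c u kernel(2,3)] by (simp add: K_line_def K_orth_def H_def)
    ultimately show ?thesis
      using kernel(1) by metis
  qed
  ultimately show ?thesis
    unfolding classes by blast
qed

lemma line_scaleR_image:
  assumes "\<mu> \<noteq> 0"
  shows "(\<lambda>x. \<mu> *\<^sub>R x) ` line u = line u"
proof
  show "(\<lambda>x. \<mu> *\<^sub>R x) ` line u \<subseteq> line u"
    by (auto simp: line_def)
  show "line u \<subseteq> (\<lambda>x. \<mu> *\<^sub>R x) ` line u"
  proof
    fix z assume "z \<in> line u"
    then obtain t where "z = t *\<^sub>R u"
      by (auto simp: line_def)
    then have "z = \<mu> *\<^sub>R ((t / \<mu>) *\<^sub>R u)" "(t / \<mu>) *\<^sub>R u \<in> line u"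
      using assms by (auto simp: line_def)
    then show "z \<in> (\<lambda>x. \<mu> *\<^sub>R x) ` line u"
      by (rule image_eqI)
  qed
qed

lemma stab_subset_conf_stab: "stab c u \<subseteq> conf_stab c u"
proof
  fix L assume L: "L \<in> stab c u"
  then have "L *v x = x" if "x \<in> line u" for x
    using that by (auto simp: stab_def line_def matrix_vector_mult_scaleR)
  then have "(\<lambda>x. L *v x) ` line u = line u"
    by simp
  with L show "L \<in> conf_stab c u"
    unfolding conf_stab_def stab_def
    by (auto intro!: exI[of _ "1::real"])
qed

lemma poinc_X_subset_conf_poinc_X: "poinc_X c u \<subseteq> conf_poinc_X c u"
  unfolding poinc_X_def conf_poinc_X_def using stab_subset_conf_stab by blast

lemma dilation_in_conf_poinc_X:
  assumes "\<mu> > 0"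
  shows "(\<lambda>x. \<mu> *\<^sub>R x) \<in> conf_poinc_X c u"
proof -
  have M: "(\<mu> *\<^sub>R mat 1) *v x = \<mu> *\<^sub>R x" for x :: "real^4"
    by (simp add: scaleR_matrix_vector_assoc[symmetric])
  have "\<mu> *\<^sub>R mat 1 \<in> conf_stab c u"
    using assms mat_1_in_stab line_scaleR_image[of \<mu> u]
    by (auto simp: conf_stab_def M stab_def)
  then show ?thesis
    unfolding conf_poinc_X_def M[symmetric] by force
qed

lemma conf_stab_preserves_orth:
  assumes u: "timelike c u" and M: "M \<in> conf_stab c u" and v: "v \<in> orth c u"
  shows "M *v v \<in> orth c u"
proof -
  obtain \<mu> L where "M = \<mu> *\<^sub>R L" and L: "L \<in> lorentz_po c"
    and img: "(\<lambda>x. M *v x) ` line u = line u"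
    using M by (auto simp: conf_stab_def)
  have "lor c (L *v x) (L *v y) = lor c x y" for x y
    using L by (simp add: lorentz_po_def)
  then have iso: "lor c (M *v x) (M *v y) = \<mu> * \<mu> * lor c x y" for x y
    by (simp add: \<open>M = \<mu> *\<^sub>R L\<close> scaleR_matrix_vector_assoc[symmetric] lor_simps)
  have "u \<in> line u"
    unfolding line_def by (auto intro: exI[of _ 1])
  then obtain t where "u = M *v (t *\<^sub>R u)"
    using img by (auto simp: line_def)
  then have "u = t *\<^sub>R (M *v u)"
    by (simp add: matrix_vector_mult_scaleR)
  then have "lor c (M *v v) u = t * (\<mu> * \<mu> * lor c v u)"
    by (metis iso lor_scaleR_right)
  with v show ?thesis
    by (simp add: orth_def)
qed

lemma subgroup_add_real_cone_cases:
  fixes H :: "real set"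
  assumes H: "subgroup_add H" and cone: "\<And>\<mu> h. \<mu> > 0 \<Longrightarrow> h \<in> H \<Longrightarrow> \<mu> * h \<in> H"
  shows "H = {0} \<or> H = UNIV"
proof (cases "H \<subseteq> {0}")
  case True
  with H show ?thesis
    by (auto simp: subgroup_add_def)
next
  case False
  then obtain h where "h \<in> H" "h \<noteq> 0"
    by blast
  then have "\<bar>h\<bar> \<in> H"
    using subgroup_add_uminus[OF H] by (cases "h \<ge> 0") simp_all
  have pos: "s \<in> H" if "s > 0" for s
    using cone[OF _ \<open>\<bar>h\<bar> \<in> H\<close>, of "s / \<bar>h\<bar>"] that \<open>h \<noteq> 0\<close> by simp
  have "t \<in> H" for t
  proof -
    consider "t > 0" | "t = 0" | "t < 0"
      by linarith
    then show ?thesis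
    proof cases
      case 1
      then show ?thesis by (rule pos)
    next
      case 2
      then show ?thesis using H by (simp add: subgroup_add_def)
    next
      case 3
      then show ?thesis using subgroup_add_uminus[OF H pos[of "- t"]] by simp
    qed
  qed
  then show ?thesis
    by blast
qed

lemma std_sync_eq_coset_rel: "std_sync c u = coset_rel (orth c u)"
  by (auto simp: std_sync_def coset_rel_def orth_def lor_simps)

lemma worldlines_iff_coset_rel_line:
  "(\<forall>x. R `` {x} = {x + t *\<^sub>R u | t. True}) \<longleftrightarrow> R = coset_rel (line u)"
proof -
  have "{x + t *\<^sub>R u | t. True} = {x + k | k. k \<in> line u}" for x
    by (auto simp: line_def)
  then show ?thesis
    by (simp add: eq_coset_rel_iff_Image)
qed

lemma invariant_conf_poinc_X_cases:
  assumes c: "c > 0" and u: "timelike c u" and eq: "equiv UNIV R"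
    and inv: "invariant_under (conf_poinc_X c u) R"
  shows "R = Id \<or> R = coset_rel (line u) \<or> R = std_sync c u \<or> R = UNIV"
proof -
  have "invariant_under (poinc_X c u) R"
    using inv poinc_X_subset_conf_poinc_X by (auto simp: invariant_under_def)
  note kernel = invariant_poinc_X_kernel[OF eq this]
  define K where "K = R `` {0}"
  define H where "H = {h. h *\<^sub>R u \<in> K}"
  have R: "R = coset_rel K"
    unfolding K_def by (rule kernel(1))
  have dilate: "\<mu> *\<^sub>R k \<in> K" if "\<mu> > 0" "k \<in> K" for \<mu> k
    using inv dilation_in_conf_poinc_X[OF that(1)] that(2)
    by (force simp: invariant_under_def K_def)
  have "\<mu> * h \<in> H" if "\<mu> > 0" "h \<in> H" for \<mu> h
    using dilate[OF that(1), of "h *\<^sub>R u"] that(2) by (simp add: H_def)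
  moreover have "subgroup_add H"
    unfolding H_def K_def by (rule subgroup_add_scaleR_preimage[OF kernel(2)])
  ultimately have H_cases: "H = {0} \<or> H = UNIV"
    using subgroup_add_real_cone_cases by blast
  have K_cases: "K = {h *\<^sub>R u | h. h \<in> H} \<or> K = {v + h *\<^sub>R u | v h. v \<in> orth c u \<and> h \<in> H}"
    using stab_invariant_subgroup_cases[OF c u kernel(2,3)] by (simp add: H_def K_def)
  have "{h *\<^sub>R u | h. h \<in> {0}} = {0}" "{h *\<^sub>R u | h. h \<in> UNIV} = line u"
    "{v + h *\<^sub>R u | v h. v \<in> orth c u \<and> h \<in> {0}} = orth c u"
    by (auto simp: line_def)
  moreover have "{v + h *\<^sub>R u | v h. v \<in> orth c u \<and> h \<in> UNIV} = UNIV"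
    using orth_plus_line[OF u] by blast
  ultimately have "K = {0} \<or> K = line u \<or> K = orth c u \<or> K = UNIV"
    using H_cases K_cases by (elim disjE) simp_all
  moreover have "coset_rel {0} = Id" "coset_rel UNIV = UNIV"
    by (auto simp: coset_rel_def)
  ultimately show ?thesis
    unfolding R std_sync_eq_coset_rel by metis
qed

lemma std_sync_properties:
  assumes u: "timelike c u"
  shows "equiv UNIV (std_sync c u)" and "invariant_under (conf_poinc_X c u) (std_sync c u)"
    and "\<not> trivial_rel (std_sync c u)" and "std_sync c u \<noteq> coset_rel (line u)"
proof -
  show "equiv UNIV (std_sync c u)"
    by (simp add: std_sync_eq_coset_rel equiv_coset_rel_iff subgroup_add_orth)
  show "invariant_under (conf_poinc_X c u) (std_sync c u)"
    unfolding std_sync_eq_coset_rel conf_poinc_X_def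
    by (intro invariant_under_affine_coset_rel conf_stab_preserves_orth[OF u])
  obtain n where n: "n \<noteq> 0" "n \<in> orth c u"
    using lor_orthogonal_to_two_exists[of c u u] by (auto simp: orth_def)
  have "u \<notin> orth c u"
    using u by (simp add: orth_def timelike_def)
  then have "(0, n) \<in> std_sync c u" "(0, n) \<notin> Id" "(0, u) \<notin> std_sync c u"
    using n by (simp_all add: std_sync_eq_coset_rel coset_rel_def)
  then show "\<not> trivial_rel (std_sync c u)"
    unfolding trivial_rel_def by blast
  have "n \<notin> line u"
    using orth_inter_line[OF u n(2)] n(1) by blast
  with \<open>(0, n) \<in> std_sync c u\<close> show "std_sync c u \<noteq> coset_rel (line u)"
    by (auto simp: coset_rel_def)
qed

theorem theorem3p17:
  fixes c :: real and u :: "real^4"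
  assumes "c > 0" and "timelike c u"
  shows "(\<forall>R. equiv UNIV R \<longrightarrow> (invariant_under (poinc_X c u) R \<longleftrightarrow>
            (\<exists>H. add_subgroup H \<and>
               ((\<forall>x. R `` {x} = {x + h *\<^sub>R u | h. h \<in> H}) \<or>
                (\<forall>x. R `` {x} = {x + v + h *\<^sub>R u | v h. v \<in> orth c u \<and> h \<in> H})))))
       \<and> (\<forall>R. (equiv UNIV R \<and> invariant_under (conf_poinc_X c u) R \<and> \<not> trivial_rel R
               \<and> \<not> (\<forall>x. R `` {x} = {x + t *\<^sub>R u | t. True}))
              \<longleftrightarrow> R = std_sync c u)"
proof (intro conjI allI impI)
  fix R :: "(real^4) rel"
  assume "equiv UNIV R"
  then show "invariant_under (poinc_X c u) R \<longleftrightarrow>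
            (\<exists>H. add_subgroup H \<and>
               ((\<forall>x. R `` {x} = {x + h *\<^sub>R u | h. h \<in> H}) \<or>
                (\<forall>x. R `` {x} = {x + v + h *\<^sub>R u | v h. v \<in> orth c u \<and> h \<in> H})))"
    by (rule invariant_poinc_X_iff[OF assms])
next
  fix R :: "(real^4) rel"
  show "(equiv UNIV R \<and> invariant_under (conf_poinc_X c u) R \<and> \<not> trivial_rel R
           \<and> \<not> (\<forall>x. R `` {x} = {x + t *\<^sub>R u | t. True})) \<longleftrightarrow> R = std_sync c u"
    using invariant_conf_poinc_X_cases[OF assms, of R] std_sync_properties[OF assms(2)]
    unfolding worldlines_iff_coset_rel_line trivial_rel_def by blast
qed

end
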